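(* For any graphs $G$ and $H$, $A_1(G\,\square\, H)\cong A_1(G)\times A_1(H)$, where $G\,\square\,H$ is the Cartesian product graph.
   Context: All graphs are connected, simple and locally finite. The Cartesian product $G\,\square\,H$ has vertex set $V(G)\times V(H)$, with $(g,h)\sim(g',h')$ iff ($g=g'$ and $h\sim h'$) or ($h=h'$ and $g\sim g'$). $A_1$ is the discrete fundamental group: for base vertex $v_0$, elements are classes of graph maps $f:\mathbb{Z}\to G$ ($\mathbb{Z}$ the path graph on the integers) with $f(i)=v_0$ for $|i|\ge r_f$ ($r_f$ minimal), modulo based homotopy (a graph map $h:\mathbb{Z}\,\square\, I_m\to G$, $I_m$ the path on $\{0,\dots,m\}$, with $h(\cdot,0)=f$, $h(\cdot,m)=g$, each $h(\cdot,j)$ based); product by concatenation $p(i)=f(i+r_f)$ for $i\le0$, $p(i)=g(i-r_g)$ for $i\ge0$. *)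

theory Defs
  imports "HOL-Algebra.Group"
begin

definition simple_graph :: "'a set \<Rightarrow> ('a \<Rightarrow> 'a \<Rightarrow> bool) \<Rightarrow> bool" where
  "simple_graph V E \<longleftrightarrow>
     (\<forall>x y. E x y \<longrightarrow> x \<in> V \<and> y \<in> V) \<and>
     (\<forall>x. \<not> E x x) \<and>
     (\<forall>x y. E x y \<longrightarrow> E y x)"

definition connected_graph :: "'a set \<Rightarrow> ('a \<Rightarrow> 'a \<Rightarrow> bool) \<Rightarrow> bool" where
  "connected_graph V E \<longleftrightarrow> V \<noteq> {} \<and> (\<forall>x\<in>V. \<forall>y\<in>V. E\<^sup>*\<^sup>* x y)"

definition locally_finite :: "'a set \<Rightarrow> ('a \<Rightarrow> 'a \<Rightarrow> bool) \<Rightarrow> bool" where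
  "locally_finite V E \<longleftrightarrow> (\<forall>x\<in>V. finite {y. E x y})"

definition graph :: "'a set \<Rightarrow> ('a \<Rightarrow> 'a \<Rightarrow> bool) \<Rightarrow> bool" where
  "graph V E \<longleftrightarrow> simple_graph V E \<and> connected_graph V E \<and> locally_finite V E"

definition cart_V :: "'a set \<Rightarrow> 'b set \<Rightarrow> ('a \<times> 'b) set" where
  "cart_V V W = V \<times> W"

definition cart_E :: "('a \<Rightarrow> 'a \<Rightarrow> bool) \<Rightarrow> ('b \<Rightarrow> 'b \<Rightarrow> bool)
    \<Rightarrow> ('a \<times> 'b) \<Rightarrow> ('a \<times> 'b) \<Rightarrow> bool" where
  "cart_E E F = (\<lambda>(g,h) (g',h'). (g = g' \<and> F h h') \<or> (h = h' \<and> E g g'))"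

text \<open>Graph maps send adjacent vertices to adjacent or equal vertices.
  A based loop is a graph map from the integer path graph that equals the
  base vertex outside a finite window.\<close>

definition adj_or_eq :: "('a \<Rightarrow> 'a \<Rightarrow> bool) \<Rightarrow> 'a \<Rightarrow> 'a \<Rightarrow> bool" where
  "adj_or_eq E x y \<longleftrightarrow> x = y \<or> E x y"

definition based_loop :: "'a set \<Rightarrow> ('a \<Rightarrow> 'a \<Rightarrow> bool) \<Rightarrow> 'a \<Rightarrow> (int \<Rightarrow> 'a) \<Rightarrow> bool" where
  "based_loop V E v0 f \<longleftrightarrow>
     (\<forall>i. f i \<in> V) \<and>
     (\<forall>i. adj_or_eq E (f i) (f (i + 1))) \<and>
     (\<exists>r::nat. \<forall>i. \<bar>i\<bar> \<ge> int r \<longrightarrow> f i = v0)"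

definition loop_radius :: "'a \<Rightarrow> (int \<Rightarrow> 'a) \<Rightarrow> nat" where
  "loop_radius v0 f = (LEAST r::nat. \<forall>i. \<bar>i\<bar> \<ge> int r \<longrightarrow> f i = v0)"

text \<open>Based homotopy: a graph map from the product of the integer path
  with the path I_m on {0..m}, each row being a based loop.\<close>

definition based_homotopic :: "'a set \<Rightarrow> ('a \<Rightarrow> 'a \<Rightarrow> bool) \<Rightarrow> 'a
    \<Rightarrow> (int \<Rightarrow> 'a) \<Rightarrow> (int \<Rightarrow> 'a) \<Rightarrow> bool" where
  "based_homotopic V E v0 f g \<longleftrightarrow>
     (\<exists>(m::nat) (h :: int \<Rightarrow> nat \<Rightarrow> 'a).
        (\<forall>i. h i 0 = f i) \<and> (\<forall>i. h i m = g i) \<and>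
        (\<forall>j\<le>m. based_loop V E v0 (\<lambda>i. h i j)) \<and>
        (\<forall>i. \<forall>j<m. adj_or_eq E (h i j) (h i (Suc j))))"

definition loop_concat :: "'a \<Rightarrow> (int \<Rightarrow> 'a) \<Rightarrow> (int \<Rightarrow> 'a) \<Rightarrow> (int \<Rightarrow> 'a)" where
  "loop_concat v0 f g =
     (\<lambda>i. if i \<le> 0 then f (i + int (loop_radius v0 f))
          else g (i - int (loop_radius v0 g)))"

definition loop_class :: "'a set \<Rightarrow> ('a \<Rightarrow> 'a \<Rightarrow> bool) \<Rightarrow> 'a
    \<Rightarrow> (int \<Rightarrow> 'a) \<Rightarrow> (int \<Rightarrow> 'a) set" where
  "loop_class V E v0 f = {g. based_loop V E v0 g \<and> based_homotopic V E v0 f g}"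

definition A1 :: "'a set \<Rightarrow> ('a \<Rightarrow> 'a \<Rightarrow> bool) \<Rightarrow> 'a \<Rightarrow> (int \<Rightarrow> 'a) set monoid" where
  "A1 V E v0 =
     \<lparr> carrier = loop_class V E v0 ` {f. based_loop V E v0 f},
       mult = (\<lambda>X Y. loop_class V E v0
                 (loop_concat v0 (SOME f. f \<in> X) (SOME g. g \<in> Y))),
       one = loop_class V E v0 (\<lambda>_. v0) \<rparr>"

end

theory Submission
  imports Defs
begin

text \<open>A based loop in \<open>G \<box> H\<close> projects to based loops in \<open>G\<close> and \<open>H\<close>, and the projections are
  graph maps, so they induce a homomorphism \<open>A\<^sub>1(G \<box> H) \<rightarrow> A\<^sub>1(G) \<times> A\<^sub>1(H)\<close>.
  Conversely, two loops \<open>a\<close> and \<open>b\<close> supported in \<open>[-R, R]\<close> combine to the loop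
  \<open>i \<mapsto> (a (i + 2R), b i)\<close> in the product: only one coordinate moves at a time.
  This gives surjectivity. For injectivity, every loop \<open>\<gamma>\<close> of the product is homotopic to this
  combination of its own projections, by sliding the first coordinate away one step at a time;
  homotopies of the projections then act on the two separated coordinates independently.\<close>

section \<open>Based loops and their homotopies\<close>

lemma adj_or_eq_refl [simp]: "adj_or_eq E x x"
  by (simp add: adj_or_eq_def)

lemma adj_or_eq_sym: "symp E \<Longrightarrow> adj_or_eq E x y \<Longrightarrow> adj_or_eq E y x"
  unfolding adj_or_eq_def by (auto dest: sympD)

definition based_beyond :: "'a \<Rightarrow> nat \<Rightarrow> (int \<Rightarrow> 'a) \<Rightarrow> bool" where
  "based_beyond v0 R f \<longleftrightarrow> (\<forall>i. int R \<le> \<bar>i\<bar> \<longrightarrow> f i = v0)"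

lemma based_beyond_mono: "based_beyond v0 R f \<Longrightarrow> R \<le> S \<Longrightarrow> based_beyond v0 S f"
  unfolding based_beyond_def by force

lemma based_beyond_comp: "based_beyond v0 R f \<Longrightarrow> based_beyond (\<phi> v0) R (\<phi> \<circ> f)"
  unfolding based_beyond_def by simp

lemma based_loop_iff:
  "based_loop V E v0 f \<longleftrightarrow>
     (\<forall>i. f i \<in> V) \<and> (\<forall>i. adj_or_eq E (f i) (f (i + 1))) \<and> (\<exists>R. based_beyond v0 R f)"
  unfolding based_loop_def based_beyond_def ..

lemma based_loopI:
  "(\<And>i. f i \<in> V) \<Longrightarrow> (\<And>i. adj_or_eq E (f i) (f (i + 1))) \<Longrightarrow> based_beyond v0 R f
    \<Longrightarrow> based_loop V E v0 f"
  unfolding based_loop_iff by blast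

lemma based_loop_vertex: "based_loop V E v0 f \<Longrightarrow> f i \<in> V"
  unfolding based_loop_def by blast

lemma based_loop_adj: "based_loop V E v0 f \<Longrightarrow> adj_or_eq E (f i) (f (i + 1))"
  unfolding based_loop_def by blast

lemma based_beyond_loop_radius:
  assumes "based_loop V E v0 f"
  shows "based_beyond v0 (loop_radius v0 f) f"
proof -
  from assms obtain R where "based_beyond v0 R f"
    by (auto simp: based_loop_iff)
  then show ?thesis
    unfolding based_beyond_def loop_radius_def by (rule LeastI)
qed

lemma eventually_based_beyond:
  assumes "based_loop V E v0 f"
  shows "\<forall>\<^sub>F R in sequentially. based_beyond v0 R f"
  unfolding eventually_sequentially
  using based_beyond_mono[OF based_beyond_loop_radius[OF assms]] by blast

lemma based_homotopicI:
  assumes "H 0 = f" and "H m = g"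
    and "\<And>j. j \<le> m \<Longrightarrow> based_loop V E v0 (H j)"
    and "\<And>i j. j < m \<Longrightarrow> adj_or_eq E (H j i) (H (Suc j) i)"
  shows "based_homotopic V E v0 f g"
  unfolding based_homotopic_def
  by (rule exI[of _ m], rule exI[of _ "\<lambda>i j. H j i"]) (use assms in auto)

lemma based_homotopicE:
  assumes "based_homotopic V E v0 f g"
  obtains H m R where "H 0 = f" and "\<And>j. m \<le> j \<Longrightarrow> H j = g"
    and "\<And>j. based_loop V E v0 (H j)" and "\<And>j. based_beyond v0 R (H j)"
    and "\<And>i j. adj_or_eq E (H j i) (H (Suc j) i)"
proof -
  obtain m h where h0: "\<forall>i. h i 0 = f i" and hm: "\<forall>i. h i m = g i"
    and rows: "\<forall>j\<le>m. based_loop V E v0 (\<lambda>i. h i j)"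
    and adj: "\<forall>i. \<forall>j<m. adj_or_eq E (h i j) (h i (Suc j))"
    using assms unfolding based_homotopic_def by blast
  define H where "H j = (\<lambda>i. h i (min j m))" for j
  define R where "R = (\<Sum>j\<le>m. loop_radius v0 (H j))"
  have H0: "H 0 = f"
    using h0 by (auto simp: H_def)
  have Hm: "H j = g" if "m \<le> j" for j
    using hm that by (auto simp: H_def)
  have loops: "based_loop V E v0 (H j)" for j
    using rows by (simp add: H_def)
  have beyond: "based_beyond v0 R (H j)" for j
  proof -
    have "loop_radius v0 (H (min j m)) \<le> R"
      unfolding R_def by (rule member_le_sum) auto
    moreover have "H (min j m) = H j"
      by (simp add: H_def)
    ultimately show ?thesis
      using based_beyond_mono[OF based_beyond_loop_radius[OF loops[of "min j m"]]] by simp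
  qed
  have adj': "adj_or_eq E (H j i) (H (Suc j) i)" for i j
    using adj by (cases "j < m") (auto simp: H_def)
  show ?thesis
    by (rule that[of H m R, OF H0 Hm loops beyond adj'])
qed

lemma based_homotopic_refl: "based_loop V E v0 f \<Longrightarrow> based_homotopic V E v0 f f"
  by (rule based_homotopicI[where H = "\<lambda>_. f" and m = 0]) auto

lemma based_homotopic_sym:
  assumes "symp E" and "based_homotopic V E v0 f g"
  shows "based_homotopic V E v0 g f"
proof -
  obtain H m R where H: "H 0 = f" "\<And>j. m \<le> j \<Longrightarrow> H j = g" "\<And>j. based_loop V E v0 (H j)"
    "\<And>j. based_beyond v0 R (H j)" and adj: "\<And>i j. adj_or_eq E (H j i) (H (Suc j) i)"
    using assms(2) by (rule based_homotopicE) blast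
  show ?thesis
  proof (rule based_homotopicI[where H = "\<lambda>j. H (m - j)" and m = m])
    fix i j assume "j < m"
    then have "Suc (m - Suc j) = m - j"
      by simp
    then show "adj_or_eq E (H (m - j) i) (H (m - Suc j) i)"
      using adj_or_eq_sym[OF assms(1) adj[of "m - Suc j" i]] by simp
  qed (simp_all add: H(1,2,3))
qed

lemma based_homotopic_trans [trans]:
  assumes "based_homotopic V E v0 f g" and "based_homotopic V E v0 g h"
  shows "based_homotopic V E v0 f h"
proof -
  obtain H m R where H: "H 0 = f" "\<And>j. m \<le> j \<Longrightarrow> H j = g" "\<And>j. based_loop V E v0 (H j)"
    "\<And>j. based_beyond v0 R (H j)" "\<And>i j. adj_or_eq E (H j i) (H (Suc j) i)"
    using assms(1) by (rule based_homotopicE) blast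
  obtain K n S where K: "K 0 = g" "\<And>j. n \<le> j \<Longrightarrow> K j = h" "\<And>j. based_loop V E v0 (K j)"
    "\<And>j. based_beyond v0 S (K j)" "\<And>i j. adj_or_eq E (K j i) (K (Suc j) i)"
    using assms(2) by (rule based_homotopicE) blast
  define L where "L j = (if j \<le> m then H j else K (j - m))" for j
  show ?thesis
  proof (rule based_homotopicI[where H = L and m = "m + n"])
    fix i j
    show "adj_or_eq E (L j i) (L (Suc j) i)"
    proof (cases "j < m")
      case True
      then show ?thesis using H(5) by (simp add: L_def)
    next
      case False
      then have "L j = K (j - m)"
        using H(2)[of m] K(1) by (cases "j = m") (simp_all add: L_def)
      moreover have "L (Suc j) = K (Suc (j - m))"
        using False by (simp add: L_def Suc_diff_le)
      ultimately show ?thesis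
        using K(5) by simp
    qed
  next
    show "L (m + n) = h"
      using H(2)[of m] K(1) K(2)[of n] by (cases "n = 0") (simp_all add: L_def)
  qed (use H(1,3) K(3) in \<open>simp_all add: L_def\<close>)
qed

lemma loop_class_eq_iff:
  assumes "symp E" and "based_loop V E v0 g"
  shows "loop_class V E v0 f = loop_class V E v0 g \<longleftrightarrow> based_homotopic V E v0 f g"
proof
  assume "loop_class V E v0 f = loop_class V E v0 g"
  moreover have "g \<in> loop_class V E v0 g"
    using assms(2) by (simp add: loop_class_def based_homotopic_refl)
  ultimately have "g \<in> loop_class V E v0 f"
    by simp
  then show "based_homotopic V E v0 f g"
    by (simp add: loop_class_def)
next
  assume fg: "based_homotopic V E v0 f g"
  have "based_homotopic V E v0 f h \<longleftrightarrow> based_homotopic V E v0 g h" for h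
    using based_homotopic_trans[OF fg] based_homotopic_trans[OF based_homotopic_sym[OF assms(1) fg]]
    by blast
  then show "loop_class V E v0 f = loop_class V E v0 g"
    by (simp add: loop_class_def)
qed

lemma based_homotopic_some_loop_class:
  assumes "based_loop V E v0 f"
  shows "based_homotopic V E v0 f (SOME g. g \<in> loop_class V E v0 f)"
proof -
  have "f \<in> loop_class V E v0 f"
    using assms by (simp add: loop_class_def based_homotopic_refl)
  then have "(SOME g. g \<in> loop_class V E v0 f) \<in> loop_class V E v0 f"
    by (rule someI[of "\<lambda>g. g \<in> loop_class V E v0 f"])
  then show ?thesis
    by (simp add: loop_class_def)
qed

lemma based_homotopic_shift:
  assumes "based_loop V E v0 f"
  shows "based_homotopic V E v0 f (\<lambda>i. f (i + int k))"
proof (rule based_homotopicI[where H = "\<lambda>j i. f (i + int j)" and m = k])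
  fix j
  show "based_loop V E v0 (\<lambda>i. f (i + int j))"
  proof (rule based_loopI)
    show "f (i + int j) \<in> V" for i
      using based_loop_vertex[OF assms] .
    show "adj_or_eq E (f (i + int j)) (f (i + 1 + int j))" for i
      using based_loop_adj[OF assms, of "i + int j"] by (simp add: add_ac)
    show "based_beyond v0 (loop_radius v0 f + j) (\<lambda>i. f (i + int j))"
      unfolding based_beyond_def
    proof (intro allI impI)
      fix i :: int
      assume "int (loop_radius v0 f + j) \<le> \<bar>i\<bar>"
      then have "int (loop_radius v0 f) \<le> \<bar>i + int j\<bar>"
        by linarith
      then show "f (i + int j) = v0"
        using based_beyond_loop_radius[OF assms] by (simp add: based_beyond_def)
    qed
  qed
next
  show "adj_or_eq E (f (i + int j)) (f (i + int (Suc j)))" for i j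
    using based_loop_adj[OF assms, of "i + int j"] by (simp add: add_ac)
qed simp_all

section \<open>Concatenation\<close>

definition concat_at :: "nat \<Rightarrow> nat \<Rightarrow> (int \<Rightarrow> 'a) \<Rightarrow> (int \<Rightarrow> 'a) \<Rightarrow> int \<Rightarrow> 'a" where
  "concat_at R S f g = (\<lambda>i. if i \<le> 0 then f (i + int R) else g (i - int S))"

lemma loop_concat_eq_concat_at:
  "loop_concat v0 f g = concat_at (loop_radius v0 f) (loop_radius v0 g) f g"
  by (simp add: loop_concat_def concat_at_def)

lemma comp_concat_at: "\<phi> \<circ> concat_at R S f g = concat_at R S (\<phi> \<circ> f) (\<phi> \<circ> g)"
  by (auto simp: concat_at_def)

lemma concat_at_based_loop:
  assumes f: "based_loop V E v0 f" and g: "based_loop V E v0 g"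
    and R: "based_beyond v0 R f" and S: "based_beyond v0 S g"
  shows "based_loop V E v0 (concat_at R S f g)"
proof (rule based_loopI)
  show "concat_at R S f g i \<in> V" for i
    using f g by (simp add: concat_at_def based_loop_vertex)
  show "adj_or_eq E (concat_at R S f g i) (concat_at R S f g (i + 1))" for i
  proof -
    consider "i < 0" | "i = 0" | "0 < i"
      by linarith
    then show ?thesis
    proof cases
      case 1
      then show ?thesis
        using based_loop_adj[OF f, of "i + int R"] by (simp add: concat_at_def add_ac)
    next
      case 2
      have "f (int R) = v0" and "g (- int S) = v0"
        using R S by (simp_all add: based_beyond_def)
      with 2 show ?thesis
        using based_loop_adj[OF g, of "- int S"] by (simp add: concat_at_def add_ac)
    next
      case 3
      then show ?thesis
        using based_loop_adj[OF g, of "i - int S"] by (simp add: concat_at_def algebra_simps)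
    qed
  qed
  show "based_beyond v0 (2 * R + 2 * S) (concat_at R S f g)"
    unfolding based_beyond_def
  proof (intro allI impI)
    fix i :: int
    assume i: "int (2 * R + 2 * S) \<le> \<bar>i\<bar>"
    show "concat_at R S f g i = v0"
    proof (cases "i \<le> 0")
      case True
      then have "int R \<le> \<bar>i + int R\<bar>"
        using i by linarith
      with True R show ?thesis
        by (simp add: based_beyond_def concat_at_def)
    next
      case False
      then have "int S \<le> \<bar>i - int S\<bar>"
        using i by linarith
      with False S show ?thesis
        by (simp add: based_beyond_def concat_at_def)
    qed
  qed
qed

lemma concat_at_homotopic_pad:
  assumes "symp E" and f: "based_loop V E v0 f" and g: "based_loop V E v0 g"
    and R: "based_beyond v0 R f" and S: "based_beyond v0 S g"
  shows "based_homotopic V E v0 (concat_at R S f g) (concat_at (R + k) (S + l) f g)"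
proof -
  have "based_homotopic V E v0 (concat_at R S f g) (concat_at (R + k) S f g)"
  proof (rule based_homotopicI[where H = "\<lambda>j. concat_at (R + j) S f g" and m = k])
    show "based_loop V E v0 (concat_at (R + j) S f g)" for j
      using concat_at_based_loop[OF f g based_beyond_mono[OF R] S] by simp
    show "adj_or_eq E (concat_at (R + j) S f g i) (concat_at (R + Suc j) S f g i)" for i j
      using based_loop_adj[OF f, of "i + int (R + j)"] by (simp add: concat_at_def add_ac)
  qed simp_all
  moreover have "based_homotopic V E v0 (concat_at (R + k) S f g) (concat_at (R + k) (S + l) f g)"
  proof (rule based_homotopicI[where H = "\<lambda>j. concat_at (R + k) (S + j) f g" and m = l])
    show "based_loop V E v0 (concat_at (R + k) (S + j) f g)" for j
      using concat_at_based_loop[OF f g based_beyond_mono[OF R] based_beyond_mono[OF S]] by simp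
    show "adj_or_eq E (concat_at (R + k) (S + j) f g i) (concat_at (R + k) (S + Suc j) f g i)" for i j
      using adj_or_eq_sym[OF assms(1) based_loop_adj[OF g, of "i - int (S + Suc j)"]]
      by (simp add: concat_at_def algebra_simps)
  qed simp_all
  ultimately show ?thesis
    by (rule based_homotopic_trans)
qed

lemma concat_at_homotopic_radii:
  assumes "symp E" and "based_loop V E v0 f" and "based_loop V E v0 g"
    and "based_beyond v0 R f" and "based_beyond v0 S g"
    and "based_beyond v0 R' f" and "based_beyond v0 S' g"
  shows "based_homotopic V E v0 (concat_at R S f g) (concat_at R' S' f g)"
proof -
  let ?M = "concat_at (max R R') (max S S') f g"
  have "based_homotopic V E v0 (concat_at R S f g) ?M"
    using concat_at_homotopic_pad[OF assms(1-5), of "max R R' - R" "max S S' - S"] by simp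
  moreover have "based_homotopic V E v0 (concat_at R' S' f g) ?M"
    using concat_at_homotopic_pad[OF assms(1-3,6,7), of "max R R' - R'" "max S S' - S'"] by simp
  ultimately show ?thesis
    using based_homotopic_sym[OF assms(1)] based_homotopic_trans by metis
qed

lemma loop_concat_based_loop:
  assumes "based_loop V E v0 f" and "based_loop V E v0 g"
  shows "based_loop V E v0 (loop_concat v0 f g)"
  unfolding loop_concat_eq_concat_at
  using concat_at_based_loop[OF assms based_beyond_loop_radius[OF assms(1)]
      based_beyond_loop_radius[OF assms(2)]] .

lemma loop_concat_homotopic:
  assumes "symp E" and "based_homotopic V E v0 f f'" and "based_homotopic V E v0 g g'"
  shows "based_homotopic V E v0 (loop_concat v0 f g) (loop_concat v0 f' g')"
proof -
  obtain H m R where H: "H 0 = f" "\<And>j. m \<le> j \<Longrightarrow> H j = f'" "\<And>j. based_loop V E v0 (H j)"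
    "\<And>j. based_beyond v0 R (H j)" "\<And>i j. adj_or_eq E (H j i) (H (Suc j) i)"
    using assms(2) by (rule based_homotopicE) blast
  obtain K n S where K: "K 0 = g" "\<And>j. n \<le> j \<Longrightarrow> K j = g'" "\<And>j. based_loop V E v0 (K j)"
    "\<And>j. based_beyond v0 S (K j)" "\<And>i j. adj_or_eq E (K j i) (K (Suc j) i)"
    using assms(3) by (rule based_homotopicE) blast
  have "based_homotopic V E v0 (loop_concat v0 f g) (concat_at R S f g)"
    using concat_at_homotopic_radii[OF assms(1) H(3)[of 0] K(3)[of 0]
        based_beyond_loop_radius[OF H(3)[of 0]] based_beyond_loop_radius[OF K(3)[of 0]]
        H(4)[of 0] K(4)[of 0]]
    by (simp add: loop_concat_eq_concat_at H(1) K(1))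
  also have "based_homotopic V E v0 \<dots> (concat_at R S f' g')"
  proof (rule based_homotopicI[where H = "\<lambda>j. concat_at R S (H j) (K j)" and m = "max m n"])
    show "based_loop V E v0 (concat_at R S (H j) (K j))" for j
      using concat_at_based_loop[OF H(3) K(3) H(4) K(4)] .
    show "adj_or_eq E (concat_at R S (H j) (K j) i) (concat_at R S (H (Suc j)) (K (Suc j)) i)" for i j
      using H(5) K(5) by (simp add: concat_at_def)
  qed (use H(1) H(2)[of "max m n"] K(1) K(2)[of "max m n"] in simp_all)
  also have "based_homotopic V E v0 \<dots> (loop_concat v0 f' g')"
    using concat_at_homotopic_radii[OF assms(1) H(3)[of m] K(3)[of n] H(4)[of m] K(4)[of n]
        based_beyond_loop_radius[OF H(3)[of m]] based_beyond_loop_radius[OF K(3)[of n]]]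
    by (simp add: loop_concat_eq_concat_at H(2) K(2))
  finally show ?thesis .
qed

section \<open>Maps induced by graph maps\<close>

definition graph_map ::
    "'a set \<Rightarrow> ('a \<Rightarrow> 'a \<Rightarrow> bool) \<Rightarrow> 'b set \<Rightarrow> ('b \<Rightarrow> 'b \<Rightarrow> bool) \<Rightarrow> ('a \<Rightarrow> 'b) \<Rightarrow> bool" where
  "graph_map V E V' E' \<phi> \<longleftrightarrow>
     \<phi> ` V \<subseteq> V' \<and> (\<forall>x\<in>V. \<forall>y\<in>V. adj_or_eq E x y \<longrightarrow> adj_or_eq E' (\<phi> x) (\<phi> y))"

lemma based_loop_comp:
  assumes "graph_map V E V' E' \<phi>" and "based_loop V E v0 f"
  shows "based_loop V' E' (\<phi> v0) (\<phi> \<circ> f)"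
proof -
  obtain R where "based_beyond v0 R f"
    using assms(2) by (auto simp: based_loop_iff)
  then show ?thesis
    using assms unfolding graph_map_def
    by (intro based_loopI[where R = R]) (auto simp: based_beyond_comp based_loop_vertex based_loop_adj)
qed

lemma based_homotopic_comp:
  assumes "graph_map V E V' E' \<phi>" and "based_homotopic V E v0 f g"
  shows "based_homotopic V' E' (\<phi> v0) (\<phi> \<circ> f) (\<phi> \<circ> g)"
proof -
  obtain H m R where H: "H 0 = f" "\<And>j. m \<le> j \<Longrightarrow> H j = g" "\<And>j. based_loop V E v0 (H j)"
    "\<And>j. based_beyond v0 R (H j)" "\<And>i j. adj_or_eq E (H j i) (H (Suc j) i)"
    using assms(2) by (rule based_homotopicE) blast
  show ?thesis
  proof (rule based_homotopicI[where H = "\<lambda>j. \<phi> \<circ> H j" and m = m])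
    show "based_loop V' E' (\<phi> v0) (\<phi> \<circ> H j)" for j
      using based_loop_comp[OF assms(1) H(3)] .
    show "adj_or_eq E' ((\<phi> \<circ> H j) i) ((\<phi> \<circ> H (Suc j)) i)" for i j
      using assms(1) H(5)[of j i] based_loop_vertex[OF H(3)] by (simp add: graph_map_def)
  qed (use H(1) H(2)[of m] in simp_all)
qed

lemma loop_concat_comp:
  assumes "symp E'" and "graph_map V E V' E' \<phi>"
    and "based_loop V E v0 f" and "based_loop V E v0 g"
  shows "based_homotopic V' E' (\<phi> v0) (\<phi> \<circ> loop_concat v0 f g) (loop_concat (\<phi> v0) (\<phi> \<circ> f) (\<phi> \<circ> g))"
proof -
  have f': "based_loop V' E' (\<phi> v0) (\<phi> \<circ> f)" and g': "based_loop V' E' (\<phi> v0) (\<phi> \<circ> g)"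
    using based_loop_comp[OF assms(2)] assms(3,4) by blast+
  show ?thesis
    unfolding loop_concat_eq_concat_at comp_concat_at
    using concat_at_homotopic_radii[OF assms(1) f' g'
        based_beyond_comp[OF based_beyond_loop_radius[OF assms(3)]]
        based_beyond_comp[OF based_beyond_loop_radius[OF assms(4)]]
        based_beyond_loop_radius[OF f'] based_beyond_loop_radius[OF g']] .
qed

lemma carrier_A1: "carrier (A1 V E v0) = loop_class V E v0 ` {f. based_loop V E v0 f}"
  by (simp add: A1_def)

lemma A1_mult_loop_class:
  assumes "symp E" and "based_loop V E v0 f" and "based_loop V E v0 g"
  shows "loop_class V E v0 f \<otimes>\<^bsub>A1 V E v0\<^esub> loop_class V E v0 g = loop_class V E v0 (loop_concat v0 f g)"
proof -
  have "based_homotopic V E v0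
      (loop_concat v0 (SOME f'. f' \<in> loop_class V E v0 f) (SOME g'. g' \<in> loop_class V E v0 g))
      (loop_concat v0 f g)"
    using loop_concat_homotopic[OF assms(1)
        based_homotopic_sym[OF assms(1) based_homotopic_some_loop_class[OF assms(2)]]
        based_homotopic_sym[OF assms(1) based_homotopic_some_loop_class[OF assms(3)]]] .
  then show ?thesis
    using loop_class_eq_iff[OF assms(1) loop_concat_based_loop[OF assms(2,3)]] by (simp add: A1_def)
qed

definition induced_map ::
    "'b set \<Rightarrow> ('b \<Rightarrow> 'b \<Rightarrow> bool) \<Rightarrow> 'b \<Rightarrow> ('a \<Rightarrow> 'b) \<Rightarrow> (int \<Rightarrow> 'a) set \<Rightarrow> (int \<Rightarrow> 'b) set" where
  "induced_map V' E' v0' \<phi> X = loop_class V' E' v0' (\<phi> \<circ> (SOME f. f \<in> X))"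

lemma induced_map_loop_class:
  assumes "symp E'" and "graph_map V E V' E' \<phi>" and "based_loop V E v0 f"
  shows "induced_map V' E' (\<phi> v0) \<phi> (loop_class V E v0 f) = loop_class V' E' (\<phi> v0) (\<phi> \<circ> f)"
proof -
  have "based_homotopic V' E' (\<phi> v0) (\<phi> \<circ> (SOME g. g \<in> loop_class V E v0 f)) (\<phi> \<circ> f)"
    using based_homotopic_sym[OF assms(1)
        based_homotopic_comp[OF assms(2) based_homotopic_some_loop_class[OF assms(3)]]] .
  then show ?thesis
    unfolding induced_map_def using loop_class_eq_iff[OF assms(1) based_loop_comp[OF assms(2,3)]] by simp
qed

lemma induced_map_hom:
  assumes "symp E" and "symp E'" and "graph_map V E V' E' \<phi>"
  shows "induced_map V' E' (\<phi> v0) \<phi> \<in> hom (A1 V E v0) (A1 V' E' (\<phi> v0))"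
proof (rule homI)
  fix X assume "X \<in> carrier (A1 V E v0)"
  then obtain f where "based_loop V E v0 f" and "X = loop_class V E v0 f"
    by (auto simp: carrier_A1)
  then show "induced_map V' E' (\<phi> v0) \<phi> X \<in> carrier (A1 V' E' (\<phi> v0))"
    using assms(2,3) by (simp add: carrier_A1 induced_map_loop_class based_loop_comp)
next
  fix X Y assume "X \<in> carrier (A1 V E v0)" and "Y \<in> carrier (A1 V E v0)"
  then obtain f g where f: "based_loop V E v0 f" and X: "X = loop_class V E v0 f"
    and g: "based_loop V E v0 g" and Y: "Y = loop_class V E v0 g"
    by (auto simp: carrier_A1)
  have f': "based_loop V' E' (\<phi> v0) (\<phi> \<circ> f)" and g': "based_loop V' E' (\<phi> v0) (\<phi> \<circ> g)"
    using based_loop_comp[OF assms(3)] f g by blast+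
  have "induced_map V' E' (\<phi> v0) \<phi> (X \<otimes>\<^bsub>A1 V E v0\<^esub> Y)
      = loop_class V' E' (\<phi> v0) (\<phi> \<circ> loop_concat v0 f g)"
    unfolding X Y A1_mult_loop_class[OF assms(1) f g]
    using induced_map_loop_class[OF assms(2,3) loop_concat_based_loop[OF f g]] .
  also have "\<dots> = loop_class V' E' (\<phi> v0) (loop_concat (\<phi> v0) (\<phi> \<circ> f) (\<phi> \<circ> g))"
    using loop_class_eq_iff[OF assms(2) loop_concat_based_loop[OF f' g']]
      loop_concat_comp[OF assms(2,3) f g] by blast
  also have "\<dots> = induced_map V' E' (\<phi> v0) \<phi> X \<otimes>\<^bsub>A1 V' E' (\<phi> v0)\<^esub> induced_map V' E' (\<phi> v0) \<phi> Y"
    unfolding X Y induced_map_loop_class[OF assms(2,3) f] induced_map_loop_class[OF assms(2,3) g]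
    using A1_mult_loop_class[OF assms(2) f' g'] by simp
  finally show "induced_map V' E' (\<phi> v0) \<phi> (X \<otimes>\<^bsub>A1 V E v0\<^esub> Y) =
      induced_map V' E' (\<phi> v0) \<phi> X \<otimes>\<^bsub>A1 V' E' (\<phi> v0)\<^esub> induced_map V' E' (\<phi> v0) \<phi> Y" .
qed

lemma hom_pair:
  assumes "f \<in> hom G H" and "g \<in> hom G K"
  shows "(\<lambda>x. (f x, g x)) \<in> hom G (H \<times>\<times> K)"
  using assms by (auto simp: hom_def)

section \<open>Loops in the Cartesian product\<close>

lemma graph_map_fst: "graph_map (cart_V V W) (cart_E E F) V E fst"
  unfolding graph_map_def cart_V_def cart_E_def adj_or_eq_def by auto

lemma graph_map_snd: "graph_map (cart_V V W) (cart_E E F) W F snd"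
  unfolding graph_map_def cart_V_def cart_E_def adj_or_eq_def by auto

lemma symp_cart_E: "symp E \<Longrightarrow> symp F \<Longrightarrow> symp (cart_E E F)"
  unfolding cart_E_def by (auto intro!: sympI dest: sympD)

lemma based_loop_fst:
  "based_loop (cart_V V W) (cart_E E F) (v0, w0) \<gamma> \<Longrightarrow> based_loop V E v0 (fst \<circ> \<gamma>)"
  using based_loop_comp[OF graph_map_fst] by fastforce

lemma based_loop_snd:
  "based_loop (cart_V V W) (cart_E E F) (v0, w0) \<gamma> \<Longrightarrow> based_loop W F w0 (snd \<circ> \<gamma>)"
  using based_loop_comp[OF graph_map_snd] by fastforce

lemma adj_or_eq_cart_E_fst: "adj_or_eq E x x' \<Longrightarrow> adj_or_eq (cart_E E F) (x, y) (x', y)"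
  unfolding adj_or_eq_def cart_E_def by auto

lemma adj_or_eq_cart_E_snd: "adj_or_eq F y y' \<Longrightarrow> adj_or_eq (cart_E E F) (x, y) (x, y')"
  unfolding adj_or_eq_def cart_E_def by auto

definition shifted_pair :: "nat \<Rightarrow> (int \<Rightarrow> 'a) \<Rightarrow> (int \<Rightarrow> 'b) \<Rightarrow> int \<Rightarrow> 'a \<times> 'b" where
  "shifted_pair R a b = (\<lambda>i. (a (i + 2 * int R), b i))"

text \<open>Once \<open>a\<close> and \<open>b\<close> are based beyond \<open>R\<close>, the shifted first coordinate is back at
  \<open>v0\<close> before the second one leaves \<open>w0\<close>, so only one coordinate moves at each step.\<close>

lemma shifted_pair_step:
  assumes a: "based_loop V E v0 a" and b: "based_loop W F w0 b"
    and Ra: "based_beyond v0 R a" and Rb: "based_beyond w0 R b"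
  shows "adj_or_eq (cart_E E F) (a (i + 2 * int R), b i) (a (i + 2 * int R + 1), b (i + 1))"
proof (cases "int R \<le> i + 2 * int R")
  case True
  then have "a (i + 2 * int R) = v0" and "a (i + 2 * int R + 1) = v0"
    using Ra by (auto simp: based_beyond_def)
  then show ?thesis
    using adj_or_eq_cart_E_snd[OF based_loop_adj[OF b]] by simp
next
  case False
  then have "b i = w0" and "b (i + 1) = w0"
    using Rb by (auto simp: based_beyond_def)
  then show ?thesis
    using adj_or_eq_cart_E_fst[OF based_loop_adj[OF a]] by simp
qed

lemma shifted_pair_based_loop:
  assumes a: "based_loop V E v0 a" and b: "based_loop W F w0 b"
    and Ra: "based_beyond v0 R a" and Rb: "based_beyond w0 R b"
  shows "based_loop (cart_V V W) (cart_E E F) (v0, w0) (shifted_pair R a b)"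
proof (rule based_loopI)
  show "shifted_pair R a b i \<in> cart_V V W" for i
    using a b by (simp add: shifted_pair_def cart_V_def based_loop_vertex)
  show "adj_or_eq (cart_E E F) (shifted_pair R a b i) (shifted_pair R a b (i + 1))" for i
    using shifted_pair_step[OF assms, of i] by (simp add: shifted_pair_def add_ac)
  show "based_beyond (v0, w0) (3 * R) (shifted_pair R a b)"
    unfolding based_beyond_def
  proof (intro allI impI)
    fix i :: int
    assume "int (3 * R) \<le> \<bar>i\<bar>"
    then have "int R \<le> \<bar>i + 2 * int R\<bar>" and "int R \<le> \<bar>i\<bar>"
      by linarith+
    then show "shifted_pair R a b i = (v0, w0)"
      using Ra Rb by (simp add: based_beyond_def shifted_pair_def)
  qed
qed

lemma shifted_pair_homotopic:
  assumes "based_homotopic V E v0 a a'" and "based_homotopic W F w0 b b'"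
  shows "\<forall>\<^sub>F R in sequentially. based_homotopic (cart_V V W) (cart_E E F) (v0, w0)
           (shifted_pair R a b) (shifted_pair R a' b')"
proof -
  obtain H m Ra where H: "H 0 = a" "\<And>j. m \<le> j \<Longrightarrow> H j = a'" "\<And>j. based_loop V E v0 (H j)"
    "\<And>j. based_beyond v0 Ra (H j)" "\<And>i j. adj_or_eq E (H j i) (H (Suc j) i)"
    using assms(1) by (rule based_homotopicE) blast
  obtain K n Rb where K: "K 0 = b" "\<And>j. n \<le> j \<Longrightarrow> K j = b'" "\<And>j. based_loop W F w0 (K j)"
    "\<And>j. based_beyond w0 Rb (K j)" "\<And>i j. adj_or_eq F (K j i) (K (Suc j) i)"
    using assms(2) by (rule based_homotopicE) blast
  have "based_homotopic (cart_V V W) (cart_E E F) (v0, w0) (shifted_pair R a b) (shifted_pair R a' b')"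
    if "max Ra Rb \<le> R" for R
  proof -
    have HR: "based_beyond v0 R (H j)" and KR: "based_beyond w0 R (K j)" for j
      using that based_beyond_mono[OF H(4)] based_beyond_mono[OF K(4)] by simp_all
    have "based_homotopic (cart_V V W) (cart_E E F) (v0, w0) (shifted_pair R a b) (shifted_pair R a' b)"
    proof (rule based_homotopicI[where H = "\<lambda>j. shifted_pair R (H j) (K 0)" and m = m])
      show "based_loop (cart_V V W) (cart_E E F) (v0, w0) (shifted_pair R (H j) (K 0))" for j
        using shifted_pair_based_loop[OF H(3) K(3) HR KR] .
      show "adj_or_eq (cart_E E F) (shifted_pair R (H j) (K 0) i) (shifted_pair R (H (Suc j)) (K 0) i)"
        for i j
        using adj_or_eq_cart_E_fst[OF H(5)] by (simp add: shifted_pair_def)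
    qed (use H(1) H(2)[of m] K(1) in simp_all)
    also have "based_homotopic (cart_V V W) (cart_E E F) (v0, w0) \<dots> (shifted_pair R a' b')"
    proof (rule based_homotopicI[where H = "\<lambda>j. shifted_pair R (H m) (K j)" and m = n])
      show "based_loop (cart_V V W) (cart_E E F) (v0, w0) (shifted_pair R (H m) (K j))" for j
        using shifted_pair_based_loop[OF H(3) K(3) HR KR] .
      show "adj_or_eq (cart_E E F) (shifted_pair R (H m) (K j) i) (shifted_pair R (H m) (K (Suc j)) i)"
        for i j
        using adj_or_eq_cart_E_snd[OF K(5)] by (simp add: shifted_pair_def)
    qed (use H(2)[of m] K(1) K(2)[of n] in simp_all)
    finally show ?thesis .
  qed
  then show ?thesis
    unfolding eventually_sequentially by blast
qed

text \<open>Letting \<open>c\<close> run from \<open>-r\<close> to \<open>3r\<close> moves the first coordinate of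
  a loop based beyond \<open>r\<close> into the position it has in \<open>shifted_pair\<close>.\<close>

definition slide :: "int \<Rightarrow> int \<Rightarrow> int \<Rightarrow> int" where
  "slide r c i = max i (min (i + 2 * r) c)"

lemma slide_step_cases:
  "0 \<le> r \<Longrightarrow> slide r c (i + 1) = slide r c i
    \<or> (slide r c i = i \<and> slide r c (i + 1) = i + 1)
    \<or> (slide r c i = i + 2 * r \<and> slide r c (i + 1) = i + 2 * r + 1)"
  unfolding slide_def by auto

lemma slide_Suc_cases: "slide r (c + 1) i = slide r c i \<or> slide r (c + 1) i = slide r c i + 1"
  unfolding slide_def by auto

lemma slide_far:
  "0 \<le> r \<Longrightarrow> - r \<le> c \<Longrightarrow> c \<le> 3 * r \<Longrightarrow> 5 * r \<le> \<bar>i\<bar> \<Longrightarrow> r \<le> \<bar>slide r c i\<bar> \<and> r \<le> \<bar>i\<bar>"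
  unfolding slide_def by auto

lemma slide_start: "0 \<le> r \<Longrightarrow> slide r (- r) i = i \<or> (slide r (- r) i \<le> - r \<and> i \<le> - r)"
  unfolding slide_def by auto

lemma slide_end: "0 \<le> r \<Longrightarrow> slide r (3 * r) i = i + 2 * r \<or> (r \<le> slide r (3 * r) i \<and> r \<le> i + 2 * r)"
  unfolding slide_def by auto

lemma slide_pair_based_loop:
  assumes \<gamma>: "based_loop (cart_V V W) (cart_E E F) (v0, w0) \<gamma>"
    and R: "based_beyond (v0, w0) R \<gamma>" and c: "- int R \<le> c" "c \<le> 3 * int R"
  shows "based_loop (cart_V V W) (cart_E E F) (v0, w0) (\<lambda>i. (fst (\<gamma> (slide (int R) c i)), snd (\<gamma> i)))"
proof -
  have r: "0 \<le> int R"
    by simp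
  have a: "based_loop V E v0 (fst \<circ> \<gamma>)" and b: "based_loop W F w0 (snd \<circ> \<gamma>)"
    using based_loop_fst[OF \<gamma>] based_loop_snd[OF \<gamma>] .
  have Ra: "based_beyond v0 R (fst \<circ> \<gamma>)" and Rb: "based_beyond w0 R (snd \<circ> \<gamma>)"
    using based_beyond_comp[OF R, of fst] based_beyond_comp[OF R, of snd] by simp_all
  show ?thesis
  proof (rule based_loopI)
    show "(fst (\<gamma> (slide (int R) c i)), snd (\<gamma> i)) \<in> cart_V V W" for i
      using based_loop_vertex[OF a] based_loop_vertex[OF b] by (simp add: cart_V_def)
    show "adj_or_eq (cart_E E F) (fst (\<gamma> (slide (int R) c i)), snd (\<gamma> i))
        (fst (\<gamma> (slide (int R) c (i + 1))), snd (\<gamma> (i + 1)))" for i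
      using slide_step_cases[OF r, of c i]
    proof (elim disjE conjE)
      assume "slide (int R) c (i + 1) = slide (int R) c i"
      then show ?thesis
        using adj_or_eq_cart_E_snd[OF based_loop_adj[OF b]] by simp
    next
      assume "slide (int R) c i = i" and "slide (int R) c (i + 1) = i + 1"
      then show ?thesis
        using based_loop_adj[OF \<gamma>, of i] by simp
    next
      assume "slide (int R) c i = i + 2 * int R" and "slide (int R) c (i + 1) = i + 2 * int R + 1"
      then show ?thesis
        using shifted_pair_step[OF a b Ra Rb, of i] by simp
    qed
    show "based_beyond (v0, w0) (5 * R) (\<lambda>i. (fst (\<gamma> (slide (int R) c i)), snd (\<gamma> i)))"
      unfolding based_beyond_def
    proof (intro allI impI)
      fix i :: int
      assume "int (5 * R) \<le> \<bar>i\<bar>"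
      then have "int R \<le> \<bar>slide (int R) c i\<bar>" and "int R \<le> \<bar>i\<bar>"
        using slide_far[OF r c] by simp_all
      then show "(fst (\<gamma> (slide (int R) c i)), snd (\<gamma> i)) = (v0, w0)"
        using R by (simp add: based_beyond_def)
    qed
  qed
qed

lemma based_homotopic_shifted_pair:
  assumes \<gamma>: "based_loop (cart_V V W) (cart_E E F) (v0, w0) \<gamma>" and R: "based_beyond (v0, w0) R \<gamma>"
  shows "based_homotopic (cart_V V W) (cart_E E F) (v0, w0) \<gamma> (shifted_pair R (fst \<circ> \<gamma>) (snd \<circ> \<gamma>))"
proof -
  let ?r = "int R"
  define H where "H j = (\<lambda>i. (fst (\<gamma> (slide ?r (int j - ?r) i)), snd (\<gamma> i)))" for j
  have r: "0 \<le> ?r"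
    by simp
  have fst_far: "fst (\<gamma> x) = fst (\<gamma> y)" if "?r \<le> \<bar>x\<bar>" and "?r \<le> \<bar>y\<bar>" for x y
    using R that by (simp add: based_beyond_def)
  have "H 0 = \<gamma>"
  proof
    fix i
    from slide_start[OF r, of i] have "fst (\<gamma> (slide ?r (- ?r) i)) = fst (\<gamma> i)"
      using fst_far by auto
    then show "H 0 i = \<gamma> i"
      by (simp add: H_def)
  qed
  moreover have "H (4 * R) = shifted_pair R (fst \<circ> \<gamma>) (snd \<circ> \<gamma>)"
  proof
    fix i
    from slide_end[OF r, of i] have "fst (\<gamma> (slide ?r (3 * ?r) i)) = fst (\<gamma> (i + 2 * ?r))"
      using fst_far by auto
    moreover have "int (4 * R) - ?r = 3 * ?r"
      by simp
    ultimately show "H (4 * R) i = shifted_pair R (fst \<circ> \<gamma>) (snd \<circ> \<gamma>) i"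
      by (simp add: H_def shifted_pair_def)
  qed
  moreover have "based_loop (cart_V V W) (cart_E E F) (v0, w0) (H j)" if "j \<le> 4 * R" for j
    unfolding H_def using that by (intro slide_pair_based_loop[OF \<gamma> R]) simp_all
  moreover have "adj_or_eq (cart_E E F) (H j i) (H (Suc j) i)" for i j
  proof -
    have c: "int (Suc j) - ?r = (int j - ?r) + 1"
      by simp
    from slide_Suc_cases[of ?r "int j - ?r" i] show ?thesis
    proof
      assume "slide ?r (int j - ?r + 1) i = slide ?r (int j - ?r) i"
      then show ?thesis
        unfolding H_def c by simp
    next
      assume "slide ?r (int j - ?r + 1) i = slide ?r (int j - ?r) i + 1"
      then show ?thesis
        unfolding H_def c
        using adj_or_eq_cart_E_fst[OF based_loop_adj[OF based_loop_fst[OF \<gamma>]]] by simp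
    qed
  qed
  ultimately show ?thesis
    by (intro based_homotopicI[where H = H and m = "4 * R"])
qed

lemma product_loop_with_components:
  assumes a: "based_loop V E v0 a" and b: "based_loop W F w0 b"
  obtains \<gamma> where "based_loop (cart_V V W) (cart_E E F) (v0, w0) \<gamma>"
    and "based_homotopic V E v0 a (fst \<circ> \<gamma>)" and "snd \<circ> \<gamma> = b"
proof -
  define R where "R = loop_radius v0 a + loop_radius w0 b"
  have Ra: "based_beyond v0 R a" and Rb: "based_beyond w0 R b"
    using based_beyond_mono[OF based_beyond_loop_radius[OF a]]
      based_beyond_mono[OF based_beyond_loop_radius[OF b]] by (simp_all add: R_def)
  show ?thesis
  proof (rule that)
    show "based_loop (cart_V V W) (cart_E E F) (v0, w0) (shifted_pair R a b)"
      using shifted_pair_based_loop[OF a b Ra Rb] .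
    show "based_homotopic V E v0 a (fst \<circ> shifted_pair R a b)"
      using based_homotopic_shift[OF a, of "2 * R"] by (simp add: shifted_pair_def comp_def)
    show "snd \<circ> shifted_pair R a b = b"
      by (simp add: shifted_pair_def comp_def)
  qed
qed

lemma product_based_homotopic_iff:
  assumes "symp E" and "symp F"
    and \<gamma>: "based_loop (cart_V V W) (cart_E E F) (v0, w0) \<gamma>"
    and \<delta>: "based_loop (cart_V V W) (cart_E E F) (v0, w0) \<delta>"
  shows "based_homotopic (cart_V V W) (cart_E E F) (v0, w0) \<gamma> \<delta> \<longleftrightarrow>
    based_homotopic V E v0 (fst \<circ> \<gamma>) (fst \<circ> \<delta>) \<and> based_homotopic W F w0 (snd \<circ> \<gamma>) (snd \<circ> \<delta>)"
proof
  assume "based_homotopic (cart_V V W) (cart_E E F) (v0, w0) \<gamma> \<delta>"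
  then show "based_homotopic V E v0 (fst \<circ> \<gamma>) (fst \<circ> \<delta>) \<and> based_homotopic W F w0 (snd \<circ> \<gamma>) (snd \<circ> \<delta>)"
    using based_homotopic_comp[OF graph_map_fst] based_homotopic_comp[OF graph_map_snd] by fastforce
next
  assume "based_homotopic V E v0 (fst \<circ> \<gamma>) (fst \<circ> \<delta>) \<and> based_homotopic W F w0 (snd \<circ> \<gamma>) (snd \<circ> \<delta>)"
  then have "\<forall>\<^sub>F R in sequentially. based_homotopic (cart_V V W) (cart_E E F) (v0, w0)
      (shifted_pair R (fst \<circ> \<gamma>) (snd \<circ> \<gamma>)) (shifted_pair R (fst \<circ> \<delta>) (snd \<circ> \<delta>))"
    by (blast intro: shifted_pair_homotopic)
  moreover note eventually_based_beyond[OF \<gamma>] eventually_based_beyond[OF \<delta>]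
  ultimately have "\<forall>\<^sub>F R in sequentially. based_beyond (v0, w0) R \<gamma> \<and> based_beyond (v0, w0) R \<delta> \<and>
      based_homotopic (cart_V V W) (cart_E E F) (v0, w0)
        (shifted_pair R (fst \<circ> \<gamma>) (snd \<circ> \<gamma>)) (shifted_pair R (fst \<circ> \<delta>) (snd \<circ> \<delta>))"
    by eventually_elim blast
  then obtain R where R\<gamma>: "based_beyond (v0, w0) R \<gamma>" and R\<delta>: "based_beyond (v0, w0) R \<delta>"
    and mid: "based_homotopic (cart_V V W) (cart_E E F) (v0, w0)
        (shifted_pair R (fst \<circ> \<gamma>) (snd \<circ> \<gamma>)) (shifted_pair R (fst \<circ> \<delta>) (snd \<circ> \<delta>))"
    using eventually_happens'[OF sequentially_bot] by blast
  have "based_homotopic (cart_V V W) (cart_E E F) (v0, w0) \<gamma> (shifted_pair R (fst \<circ> \<gamma>) (snd \<circ> \<gamma>))"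
    using based_homotopic_shifted_pair[OF \<gamma> R\<gamma>] .
  also note mid
  also have "based_homotopic (cart_V V W) (cart_E E F) (v0, w0) (shifted_pair R (fst \<circ> \<delta>) (snd \<circ> \<delta>)) \<delta>"
    using based_homotopic_sym[OF symp_cart_E[OF assms(1,2)] based_homotopic_shifted_pair[OF \<delta> R\<delta>]] .
  finally show "based_homotopic (cart_V V W) (cart_E E F) (v0, w0) \<gamma> \<delta>" .
qed

definition product_projections ::
    "'a set \<Rightarrow> ('a \<Rightarrow> 'a \<Rightarrow> bool) \<Rightarrow> 'a \<Rightarrow> 'b set \<Rightarrow> ('b \<Rightarrow> 'b \<Rightarrow> bool) \<Rightarrow> 'b
      \<Rightarrow> (int \<Rightarrow> 'a \<times> 'b) set \<Rightarrow> (int \<Rightarrow> 'a) set \<times> (int \<Rightarrow> 'b) set" where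
  "product_projections V E v0 W F w0 X = (induced_map V E v0 fst X, induced_map W F w0 snd X)"

lemma product_projections_loop_class:
  assumes "symp E" and "symp F" and "based_loop (cart_V V W) (cart_E E F) (v0, w0) \<gamma>"
  shows "product_projections V E v0 W F w0 (loop_class (cart_V V W) (cart_E E F) (v0, w0) \<gamma>) =
    (loop_class V E v0 (fst \<circ> \<gamma>), loop_class W F w0 (snd \<circ> \<gamma>))"
  using induced_map_loop_class[OF assms(1) graph_map_fst assms(3)]
    induced_map_loop_class[OF assms(2) graph_map_snd assms(3)]
  by (simp add: product_projections_def)

lemma product_projections_hom:
  assumes "symp E" and "symp F"
  shows "product_projections V E v0 W F w0
    \<in> hom (A1 (cart_V V W) (cart_E E F) (v0, w0)) (A1 V E v0 \<times>\<times> A1 W F w0)"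
  using hom_pair[OF induced_map_hom[OF symp_cart_E[OF assms] assms(1) graph_map_fst[of V W E F]]
      induced_map_hom[OF symp_cart_E[OF assms] assms(2) graph_map_snd[of V W E F]], of "(v0, w0)"]
  unfolding product_projections_def[abs_def] by simp

lemma product_projections_inj_on:
  assumes E: "symp E" and F: "symp F"
  shows "inj_on (product_projections V E v0 W F w0) (carrier (A1 (cart_V V W) (cart_E E F) (v0, w0)))"
proof (rule inj_onI)
  fix X Y
  assume "X \<in> carrier (A1 (cart_V V W) (cart_E E F) (v0, w0))"
    and "Y \<in> carrier (A1 (cart_V V W) (cart_E E F) (v0, w0))"
    and eq: "product_projections V E v0 W F w0 X = product_projections V E v0 W F w0 Y"
  then obtain \<gamma> \<delta> where \<gamma>: "based_loop (cart_V V W) (cart_E E F) (v0, w0) \<gamma>"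
    and X: "X = loop_class (cart_V V W) (cart_E E F) (v0, w0) \<gamma>"
    and \<delta>: "based_loop (cart_V V W) (cart_E E F) (v0, w0) \<delta>"
    and Y: "Y = loop_class (cart_V V W) (cart_E E F) (v0, w0) \<delta>"
    by (auto simp: carrier_A1)
  from eq have "based_homotopic V E v0 (fst \<circ> \<gamma>) (fst \<circ> \<delta>)"
    and "based_homotopic W F w0 (snd \<circ> \<gamma>) (snd \<circ> \<delta>)"
    unfolding X Y product_projections_loop_class[OF E F \<gamma>] product_projections_loop_class[OF E F \<delta>]
    by (simp_all add: loop_class_eq_iff E F based_loop_fst[OF \<delta>] based_loop_snd[OF \<delta>])
  then have "based_homotopic (cart_V V W) (cart_E E F) (v0, w0) \<gamma> \<delta>"
    using product_based_homotopic_iff[OF E F \<gamma> \<delta>] by blast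
  then show "X = Y"
    unfolding X Y using loop_class_eq_iff[OF symp_cart_E[OF E F] \<delta>] by blast
qed

lemma product_projections_image:
  assumes E: "symp E" and F: "symp F"
  shows "product_projections V E v0 W F w0 ` carrier (A1 (cart_V V W) (cart_E E F) (v0, w0))
      = carrier (A1 V E v0 \<times>\<times> A1 W F w0)"
proof -
  have "(loop_class V E v0 a, loop_class W F w0 b)
      \<in> product_projections V E v0 W F w0 ` carrier (A1 (cart_V V W) (cart_E E F) (v0, w0))"
    if a: "based_loop V E v0 a" and b: "based_loop W F w0 b" for a b
  proof -
    obtain \<gamma> where \<gamma>: "based_loop (cart_V V W) (cart_E E F) (v0, w0) \<gamma>"
      and a\<gamma>: "based_homotopic V E v0 a (fst \<circ> \<gamma>)" and b\<gamma>: "snd \<circ> \<gamma> = b"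
      using product_loop_with_components[OF a b] .
    have "loop_class V E v0 a = loop_class V E v0 (fst \<circ> \<gamma>)"
      using loop_class_eq_iff[OF E based_loop_fst[OF \<gamma>]] a\<gamma> by blast
    then have "product_projections V E v0 W F w0 (loop_class (cart_V V W) (cart_E E F) (v0, w0) \<gamma>) =
        (loop_class V E v0 a, loop_class W F w0 b)"
      by (simp add: product_projections_loop_class[OF E F \<gamma>] b\<gamma>)
    then show ?thesis
      unfolding carrier_A1 by (rule image_eqI[OF sym]) (use \<gamma> in simp)
  qed
  then show ?thesis
    by (auto simp: carrier_A1 product_projections_loop_class E F based_loop_fst based_loop_snd)
qed

lemma symp_graph: "graph V E \<Longrightarrow> symp E"
  unfolding graph_def simple_graph_def by (auto intro: sympI)

theorem lemma4p4:
  fixes V :: "'a set" and E :: "'a \<Rightarrow> 'a \<Rightarrow> bool"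
    and W :: "'b set" and F :: "'b \<Rightarrow> 'b \<Rightarrow> bool"
    and v0 :: 'a and w0 :: 'b
  assumes "graph V E" and "graph W F"
    and "v0 \<in> V" and "w0 \<in> W"
  shows "A1 (cart_V V W) (cart_E E F) (v0, w0) \<cong> A1 V E v0 \<times>\<times> A1 W F w0"
proof -
  have E: "symp E" and F: "symp F"
    using assms(1,2) by (simp_all add: symp_graph)
  have "bij_betw (product_projections V E v0 W F w0)
      (carrier (A1 (cart_V V W) (cart_E E F) (v0, w0))) (carrier (A1 V E v0 \<times>\<times> A1 W F w0))"
    using product_projections_inj_on[OF E F] product_projections_image[OF E F] by (rule bij_betw_imageI)
  then show ?thesis
    by (rule is_isoI[OF isoI[OF product_projections_hom[OF E F]]])
qed

end
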